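(* In the setting below, consider a purely asymmetric configuration with $\lambda_{DA}$ the lexicographically strictly largest word. After one move by a robot according to Algorithm 2, $\lambda_{DA}$ remains strictly larger than each of $\lambda_{CD},\lambda_{AD},\lambda_{CB},\lambda_{AB},\lambda_{BA},\lambda_{BC}$.
   Context: Setting: $G$ is the $n\times n$ grid, $n$ even, configuration $f:V(G)\to\{0,1,2\}$ ($0$ empty, $1$ singleton, $2$ multiplicity = at least two robots; robots have only weak multiplicity detection), no corner occupied, at least one robot on the boundary. Corners $A,B,C,D$ with sides $DA,AB,BC,CD$. For adjacent corners $(X,Y)$, $\lambda_{XY}\in\{0,1,2\}^{n^2}$ reads $f$ along side $XY$ from $X$ to $Y$, then along successive parallel grid lines in order of increasing distance from $XY$, each in the same direction. Words compared lexicographically. Coordinates: when $\lambda_{DA}$ is strictly largest, node $(i,j)$ ($1\le i,j\le n$) is at distance $i-1$ from side $DC$ and $j-1$ from side $DA$; thus $D=(1,1)$, $A=(n,1)$, $C=(1,n)$, $B=(n,n)$, and $(i,j)$ is entry $n(j-1)+i$ of $\lambda_{DA}$. Asymmetric: $\lambda_{DA}$ strictly exceeds the other seven words. Second largest corner: whichever of $A,C$ starts the largest of $\lambda_{AB},\lambda_{AD},\lambda_{CB},\lambda_{CD}$. Almost symmetric of the first type: asymmetric, no multiplicities, a robot on $DC$, and $\lambda_{DA},\lambda_{DC}$ coincide after replacing each one's first nonzero entry by $0$. Almost symmetric of the second type: asymmetric, no multiplicities, and for the second largest corner $X$ with adjacent corners $Y,Z$, $\lambda_{XY},\lambda_{XZ}$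 coincide after replacing each one's first nonzero entry by $0$. Purely asymmetric: asymmetric and neither almost symmetric type. Leading duo of a purely asymmetric configuration: if the first nonzero entry of $\lambda_{DA}$ is $1$, the robots at the first two nonzero entries of $\lambda_{DA}$ (the first robot and the second robot); if it is $2$, the robots of that multiplicity. Algorithm 2: in a purely asymmetric configuration, each robot of the leading duo, located at $(i,j)$, moves to $(i-1,j)$ (along its column toward $D$) if $j=1$, or $j=2$ and $i>2$, or $i=n$ and $j\le n/2$; otherwise it moves to $(i,j-1)$ (along its row toward $D$). Other robots stay. *)

theory Defs
  imports Main
begin

text \<open>Nodes of the n x n grid are pairs (i,j) with 1 <= i,j <= n, in the coordinates of
the paper: D=(1,1), A=(n,1), C=(1,n), B=(n,n); side DA is j=1, side DC is i=1.
A configuration is f :: nat => nat => nat with values in {0,1,2}.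
The underlying robot placement is given by robot counts c :: nat => nat => nat;
the observed configuration (weak multiplicity detection) is  cap c.\<close>

definition cap :: "(nat \<Rightarrow> nat \<Rightarrow> nat) \<Rightarrow> nat \<Rightarrow> nat \<Rightarrow> nat" where
  "cap c = (\<lambda>i j. min 2 (c i j))"

text \<open>Generic reading: line k (k = 1..n, at distance k-1 from the starting side),
position l (l = 1..n) along the line.\<close>
definition word :: "nat \<Rightarrow> (nat \<Rightarrow> nat \<Rightarrow> 'a) \<Rightarrow> 'a list" where
  "word n g = concat (map (\<lambda>k. map (\<lambda>l. g k l) [1..<n+1]) [1..<n+1])"

definition lam_DA :: "nat \<Rightarrow> (nat \<Rightarrow> nat \<Rightarrow> nat) \<Rightarrow> nat list" where
  "lam_DA n f = word n (\<lambda>k l. f l k)"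
definition lam_DC :: "nat \<Rightarrow> (nat \<Rightarrow> nat \<Rightarrow> nat) \<Rightarrow> nat list" where
  "lam_DC n f = word n (\<lambda>k l. f k l)"
definition lam_AD :: "nat \<Rightarrow> (nat \<Rightarrow> nat \<Rightarrow> nat) \<Rightarrow> nat list" where
  "lam_AD n f = word n (\<lambda>k l. f (n + 1 - l) k)"
definition lam_AB :: "nat \<Rightarrow> (nat \<Rightarrow> nat \<Rightarrow> nat) \<Rightarrow> nat list" where
  "lam_AB n f = word n (\<lambda>k l. f (n + 1 - k) l)"
definition lam_BA :: "nat \<Rightarrow> (nat \<Rightarrow> nat \<Rightarrow> nat) \<Rightarrow> nat list" where
  "lam_BA n f = word n (\<lambda>k l. f (n + 1 - k) (n + 1 - l))"
definition lam_BC :: "nat \<Rightarrow> (nat \<Rightarrow> nat \<Rightarrow> nat) \<Rightarrow> nat list" where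
  "lam_BC n f = word n (\<lambda>k l. f (n + 1 - l) (n + 1 - k))"
definition lam_CB :: "nat \<Rightarrow> (nat \<Rightarrow> nat \<Rightarrow> nat) \<Rightarrow> nat list" where
  "lam_CB n f = word n (\<lambda>k l. f l (n + 1 - k))"
definition lam_CD :: "nat \<Rightarrow> (nat \<Rightarrow> nat \<Rightarrow> nat) \<Rightarrow> nat list" where
  "lam_CD n f = word n (\<lambda>k l. f k (n + 1 - l))"

definition lex_less :: "nat list \<Rightarrow> nat list \<Rightarrow> bool" where
  "lex_less u v \<longleftrightarrow> (u, v) \<in> lexord {(a, b). a < b}"

definition lex_le :: "nat list \<Rightarrow> nat list \<Rightarrow> bool" where
  "lex_le u v \<longleftrightarrow> u = v \<or> lex_less u v"

definition valid_config :: "nat \<Rightarrow> (nat \<Rightarrow> nat \<Rightarrow> nat) \<Rightarrow> bool" where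
  "valid_config n f \<longleftrightarrow> even n \<and> (\<forall>i j. f i j \<le> 2)
     \<and> f 1 1 = 0 \<and> f n 1 = 0 \<and> f 1 n = 0 \<and> f n n = 0
     \<and> (\<exists>i\<in>{1..n}. \<exists>j\<in>{1..n}. (i = 1 \<or> i = n \<or> j = 1 \<or> j = n) \<and> f i j \<noteq> 0)"

definition asymmetric :: "nat \<Rightarrow> (nat \<Rightarrow> nat \<Rightarrow> nat) \<Rightarrow> bool" where
  "asymmetric n f \<longleftrightarrow>
     lex_less (lam_DC n f) (lam_DA n f) \<and> lex_less (lam_AD n f) (lam_DA n f) \<and>
     lex_less (lam_AB n f) (lam_DA n f) \<and> lex_less (lam_BA n f) (lam_DA n f) \<and>
     lex_less (lam_BC n f) (lam_DA n f) \<and> lex_less (lam_CB n f) (lam_DA n f) \<and>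
     lex_less (lam_CD n f) (lam_DA n f)"

definition no_mult :: "nat \<Rightarrow> (nat \<Rightarrow> nat \<Rightarrow> nat) \<Rightarrow> bool" where
  "no_mult n f \<longleftrightarrow> (\<forall>i\<in>{1..n}. \<forall>j\<in>{1..n}. f i j \<noteq> 2)"

fun zero_first :: "nat list \<Rightarrow> nat list" where
  "zero_first [] = []"
| "zero_first (x # xs) = (if x = 0 then 0 # zero_first xs else 0 # xs)"

definition almost_sym1 :: "nat \<Rightarrow> (nat \<Rightarrow> nat \<Rightarrow> nat) \<Rightarrow> bool" where
  "almost_sym1 n f \<longleftrightarrow> asymmetric n f \<and> no_mult n f
     \<and> (\<exists>j\<in>{1..n}. f 1 j \<noteq> 0)
     \<and> zero_first (lam_DA n f) = zero_first (lam_DC n f)"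

definition second_is_A :: "nat \<Rightarrow> (nat \<Rightarrow> nat \<Rightarrow> nat) \<Rightarrow> bool" where
  "second_is_A n f \<longleftrightarrow> (\<exists>w\<in>{lam_AB n f, lam_AD n f}.
      \<forall>v\<in>{lam_AB n f, lam_AD n f, lam_CB n f, lam_CD n f}. lex_le v w)"

definition second_is_C :: "nat \<Rightarrow> (nat \<Rightarrow> nat \<Rightarrow> nat) \<Rightarrow> bool" where
  "second_is_C n f \<longleftrightarrow> (\<exists>w\<in>{lam_CB n f, lam_CD n f}.
      \<forall>v\<in>{lam_AB n f, lam_AD n f, lam_CB n f, lam_CD n f}. lex_le v w)"

definition almost_sym2 :: "nat \<Rightarrow> (nat \<Rightarrow> nat \<Rightarrow> nat) \<Rightarrow> bool" where
  "almost_sym2 n f \<longleftrightarrow> asymmetric n f \<and> no_mult n f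
     \<and> ((second_is_A n f \<and> zero_first (lam_AB n f) = zero_first (lam_AD n f))
      \<or> (second_is_C n f \<and> zero_first (lam_CB n f) = zero_first (lam_CD n f)))"

definition purely_asymmetric :: "nat \<Rightarrow> (nat \<Rightarrow> nat \<Rightarrow> nat) \<Rightarrow> bool" where
  "purely_asymmetric n f \<longleftrightarrow> asymmetric n f \<and> \<not> almost_sym1 n f \<and> \<not> almost_sym2 n f"

text \<open>Grid nodes in the reading order of lam_DA (node (i,j) is entry n(j-1)+i).\<close>
definition nodes_DA :: "nat \<Rightarrow> (nat \<times> nat) list" where
  "nodes_DA n = word n (\<lambda>k l. (l, k))"

definition occupied_DA :: "nat \<Rightarrow> (nat \<Rightarrow> nat \<Rightarrow> nat) \<Rightarrow> (nat \<times> nat) list" where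
  "occupied_DA n f = filter (\<lambda>(i, j). f i j \<noteq> 0) (nodes_DA n)"

text \<open>Nodes holding the leading duo: the first two occupied nodes (if the first nonzero
entry of lam_DA is 1), or the first occupied node (the multiplicity, if it is 2).\<close>
definition leading_duo :: "nat \<Rightarrow> (nat \<Rightarrow> nat \<Rightarrow> nat) \<Rightarrow> (nat \<times> nat) set" where
  "leading_duo n f = (let occ = occupied_DA n f in
     if f (fst (hd occ)) (snd (hd occ)) = 1 then set (take 2 occ) else set (take 1 occ))"

definition alg2_target :: "nat \<Rightarrow> nat \<times> nat \<Rightarrow> nat \<times> nat" where
  "alg2_target n p = (case p of (i, j) \<Rightarrow>
     if j = 1 \<or> (j = 2 \<and> i > 2) \<or> (i = n \<and> j \<le> n div 2) then (i - 1, j) else (i, j - 1))"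

definition move :: "(nat \<Rightarrow> nat \<Rightarrow> nat) \<Rightarrow> nat \<times> nat \<Rightarrow> nat \<times> nat \<Rightarrow> nat \<Rightarrow> nat \<Rightarrow> nat" where
  "move c p q = (\<lambda>i j. c i j - (if (i, j) = p then 1 else 0) + (if (i, j) = q then 1 else 0))"

end

theory Submission
  imports Defs "HOL-Library.Product_Lexorder"
begin

text \<open>Each word \<open>\<lambda>\<^sub>X\<^sub>Y\<close> is the configuration read along a bijection from keys (line, position),
  ordered lexicographically, to grid nodes, so all eight words are compared key by key.
  Algorithm 2 moves a leading robot from \<open>p\<close> to a node \<open>q\<close> that DA meets earlier than \<open>p\<close>:
  the DA word grows at the key of \<open>q\<close> and is unchanged before it, while every other word only
  shrinks, except at its own key of \<open>q\<close>. Such a word stays below DA unless it meets \<open>q\<close> before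
  both the DA-key of \<open>q\<close> and the key at which it lost to DA. The first robot lies on side DA
  in the first half, because some robot lies on the boundary and every reading meets the first robot
  no earlier than DA does; it moves towards D and DA meets it first. For the second robot, a case
  analysis of its position and target, constrained in the same way, shows that each reading either
  meets \<open>q\<close> late or its tie with DA breaks at the first robot, with a single configuration for AB
  handled by hand.\<close>

section \<open>Lexicographic comparison along sorted keys\<close>

definition lex_less_at :: "'k::linorder list \<Rightarrow> ('k \<Rightarrow> 'a::order) \<Rightarrow> ('k \<Rightarrow> 'a) \<Rightarrow> 'k \<Rightarrow> bool" where
  "lex_less_at ks u v D \<longleftrightarrow> D \<in> set ks \<and> (\<forall>K\<in>set ks. K < D \<longrightarrow> u K = v K) \<and> u D < v D"

lemma lexord_map_iff_lex_less_at:
  assumes "sorted_wrt (<) ks"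
  shows "(map u ks, map v ks) \<in> lexord {(a, b). a < b} \<longleftrightarrow> (\<exists>D. lex_less_at ks u v D)"
  using assms
proof (induction ks)
  case Nil
  then show ?case by (simp add: lex_less_at_def)
next
  case (Cons k ks)
  have after_k: "\<forall>K\<in>set ks. k < K" using Cons.prems by simp
  have "(\<exists>D. lex_less_at (k # ks) u v D) \<longleftrightarrow> u k < v k \<or> u k = v k \<and> (\<exists>D. lex_less_at ks u v D)"
    using after_k unfolding lex_less_at_def by (auto dest: less_asym)
  with Cons show ?case by simp
qed

lemma lexord_mapI:
  fixes ks :: "'k::linorder list" and u v :: "'k \<Rightarrow> 'a::order"
  assumes "sorted_wrt (<) ks" "D \<in> set ks" "\<forall>K\<in>set ks. K < D \<longrightarrow> u K \<le> v K" "u D < v D"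
  shows "(map u ks, map v ks) \<in> lexord {(a, b). a < b}"
  using assms
proof (induction ks)
  case (Cons k ks)
  have after_k: "\<forall>K\<in>set ks. k < K" using Cons.prems(1) by simp
  show ?case
  proof (cases "k = D")
    case False
    then have "k < D" "D \<in> set ks" using Cons.prems(2) after_k by auto
    then have "u k \<le> v k" using Cons.prems(3) by simp
    moreover have "(map u ks, map v ks) \<in> lexord {(a, b). a < b}"
      using Cons \<open>D \<in> set ks\<close> by simp
    ultimately show ?thesis using order_le_neq_trans by auto
  qed (use Cons.prems(4) in simp)
qed simp

text \<open>A single move: \<open>u, u'\<close> are a reading before and after it, meeting the target node at key
  \<open>B\<close>; \<open>v, v'\<close> are the DA reading, meeting it at key \<open>A\<close>.\<close>
lemma lexord_map_lower_raise:
  fixes ks :: "'k::linorder list" and u v u' v' :: "'k \<Rightarrow> 'a::order"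
  assumes sorted: "sorted_wrt (<) ks" and D: "lex_less_at ks u v D"
    and lower: "\<forall>K\<in>set ks. K \<noteq> B \<longrightarrow> u' K \<le> u K"
    and keep: "\<forall>K\<in>set ks. K < A \<longrightarrow> v' K = v K"
    and A: "A \<in> set ks" and raise: "v A < v' A"
    and before: "min A D < B"
  shows "(map u' ks, map v' ks) \<in> lexord {(a, b). a < b}"
proof (cases "D < A")
  case True
  then have "D < B" using before by simp
  show ?thesis
  proof (rule lexord_mapI[OF sorted])
    show "D \<in> set ks" using D by (simp add: lex_less_at_def)
    show "\<forall>K\<in>set ks. K < D \<longrightarrow> u' K \<le> v' K"
    proof (intro ballI impI)
      fix K assume K: "K \<in> set ks" "K < D"
      have "u' K \<le> u K" using lower K \<open>D < B\<close> by auto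
      also have "\<dots> = v K" using D K by (auto simp: lex_less_at_def)
      also have "\<dots> = v' K" using keep K True by auto
      finally show "u' K \<le> v' K" .
    qed
    have "u' D \<le> u D" using lower D \<open>D < B\<close> by (simp add: lex_less_at_def)
    also have "\<dots> < v D" using D by (simp add: lex_less_at_def)
    also have "\<dots> = v' D" using keep D True by (simp add: lex_less_at_def)
    finally show "u' D < v' D" .
  qed
next
  case False
  then have "A \<le> D" using not_less by blast
  then have "A < B" using before by (simp add: min_absorb1)
  show ?thesis
  proof (rule lexord_mapI[OF sorted A])
    show "\<forall>K\<in>set ks. K < A \<longrightarrow> u' K \<le> v' K"
    proof (intro ballI impI)
      fix K assume K: "K \<in> set ks" "K < A"
      have "u' K \<le> u K" using lower K \<open>A < B\<close> by auto
      also have "\<dots> = v K" using D K \<open>A \<le> D\<close> by (auto simp: lex_less_at_def)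
      also have "\<dots> = v' K" using keep K by simp
      finally show "u' K \<le> v' K" .
    qed
    have "u' A \<le> u A" using lower A \<open>A < B\<close> by simp
    also have "\<dots> \<le> v A" using D \<open>A \<le> D\<close> A by (auto simp: lex_less_at_def order.order_iff_strict)
    also have "\<dots> < v' A" by (rule raise)
    finally show "u' A < v' A" .
  qed
qed

section \<open>Readings of the grid\<close>

lemma sorted_wrt_product:
  fixes xs :: "'a::linorder list" and ys :: "'b::linorder list"
  assumes "sorted_wrt (<) xs" "sorted_wrt (<) ys"
  shows "sorted_wrt (<) (List.product xs ys)"
  using assms(1) by (induction xs) (auto simp: sorted_wrt_append sorted_wrt_map assms(2))

definition grid :: "nat \<Rightarrow> (nat \<times> nat) set" where
  "grid n = {1..n} \<times> {1..n}"

definition keys :: "nat \<Rightarrow> (nat \<times> nat) list" where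
  "keys n = List.product [1..<n+1] [1..<n+1]"

lemma set_keys [simp]: "set (keys n) = grid n"
  by (auto simp: keys_def grid_def)

lemma sorted_keys: "sorted_wrt (<) (keys n)"
  unfolding keys_def by (intro sorted_wrt_product sorted_wrt_upt)

lemma word_eq_map_keys: "word n g = map (case_prod g) (keys n)"
  by (simp add: word_def keys_def product_concat_map map_concat comp_def)

text \<open>\<open>read_XY n\<close> maps the key \<open>(k, l)\<close>, position \<open>l\<close> on the \<open>k\<close>-th line of \<open>\<lambda>\<^sub>X\<^sub>Y\<close>, to the node
  read there; DA and DC are read by \<open>prod.swap\<close> and \<open>id\<close>. \<open>key_XY n\<close> is the inverse where the
  reading is not an involution.\<close>
definition read_AD :: "nat \<Rightarrow> nat \<times> nat \<Rightarrow> nat \<times> nat" where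
  "read_AD n K = (n + 1 - snd K, fst K)"
definition read_AB :: "nat \<Rightarrow> nat \<times> nat \<Rightarrow> nat \<times> nat" where
  "read_AB n K = (n + 1 - fst K, snd K)"
definition read_BA :: "nat \<Rightarrow> nat \<times> nat \<Rightarrow> nat \<times> nat" where
  "read_BA n K = (n + 1 - fst K, n + 1 - snd K)"
definition read_BC :: "nat \<Rightarrow> nat \<times> nat \<Rightarrow> nat \<times> nat" where
  "read_BC n K = (n + 1 - snd K, n + 1 - fst K)"
definition read_CB :: "nat \<Rightarrow> nat \<times> nat \<Rightarrow> nat \<times> nat" where
  "read_CB n K = (snd K, n + 1 - fst K)"
definition read_CD :: "nat \<Rightarrow> nat \<times> nat \<Rightarrow> nat \<times> nat" where
  "read_CD n K = (fst K, n + 1 - snd K)"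

definition key_AD :: "nat \<Rightarrow> nat \<times> nat \<Rightarrow> nat \<times> nat" where
  "key_AD n x = (snd x, n + 1 - fst x)"
definition key_CB :: "nat \<Rightarrow> nat \<times> nat \<Rightarrow> nat \<times> nat" where
  "key_CB n x = (n + 1 - snd x, fst x)"

lemma lam_DA_eq: "lam_DA n f = map (case_prod f \<circ> prod.swap) (keys n)"
  by (simp add: lam_DA_def word_eq_map_keys comp_def case_prod_beta)
lemma lam_DC_eq: "lam_DC n f = map (case_prod f) (keys n)"
  by (simp add: lam_DC_def word_eq_map_keys)
lemma lam_AD_eq: "lam_AD n f = map (case_prod f \<circ> read_AD n) (keys n)"
  by (simp add: lam_AD_def word_eq_map_keys comp_def case_prod_beta read_AD_def)
lemma lam_AB_eq: "lam_AB n f = map (case_prod f \<circ> read_AB n) (keys n)"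
  by (simp add: lam_AB_def word_eq_map_keys comp_def case_prod_beta read_AB_def)
lemma lam_BA_eq: "lam_BA n f = map (case_prod f \<circ> read_BA n) (keys n)"
  by (simp add: lam_BA_def word_eq_map_keys comp_def case_prod_beta read_BA_def)
lemma lam_BC_eq: "lam_BC n f = map (case_prod f \<circ> read_BC n) (keys n)"
  by (simp add: lam_BC_def word_eq_map_keys comp_def case_prod_beta read_BC_def)
lemma lam_CB_eq: "lam_CB n f = map (case_prod f \<circ> read_CB n) (keys n)"
  by (simp add: lam_CB_def word_eq_map_keys comp_def case_prod_beta read_CB_def)
lemma lam_CD_eq: "lam_CD n f = map (case_prod f \<circ> read_CD n) (keys n)"
  by (simp add: lam_CD_def word_eq_map_keys comp_def case_prod_beta read_CD_def)

definition grid_bij :: "nat \<Rightarrow> (nat \<times> nat \<Rightarrow> nat \<times> nat) \<Rightarrow> (nat \<times> nat \<Rightarrow> nat \<times> nat) \<Rightarrow> bool" where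
  "grid_bij n r \<kappa> \<longleftrightarrow> (\<forall>K\<in>grid n. r K \<in> grid n \<and> \<kappa> (r K) = K) \<and> (\<forall>x\<in>grid n. \<kappa> x \<in> grid n \<and> r (\<kappa> x) = x)"

lemma grid_bij_DC: "grid_bij n id id" by (simp add: grid_bij_def)
lemma grid_bij_AD: "grid_bij n (read_AD n) (key_AD n)" by (auto simp: grid_bij_def grid_def read_AD_def key_AD_def)
lemma grid_bij_AB: "grid_bij n (read_AB n) (read_AB n)" by (auto simp: grid_bij_def grid_def read_AB_def)
lemma grid_bij_BA: "grid_bij n (read_BA n) (read_BA n)" by (auto simp: grid_bij_def grid_def read_BA_def)
lemma grid_bij_BC: "grid_bij n (read_BC n) (read_BC n)" by (auto simp: grid_bij_def grid_def read_BC_def)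
lemma grid_bij_CB: "grid_bij n (read_CB n) (key_CB n)" by (auto simp: grid_bij_def grid_def read_CB_def key_CB_def)
lemma grid_bij_CD: "grid_bij n (read_CD n) (read_CD n)" by (auto simp: grid_bij_def grid_def read_CD_def)

definition below_DA :: "nat \<Rightarrow> (nat \<times> nat \<Rightarrow> nat \<times> nat) \<Rightarrow> (nat \<times> nat \<Rightarrow> nat) \<Rightarrow> bool" where
  "below_DA n r F \<longleftrightarrow> lex_less (map (F \<circ> r) (keys n)) (map (F \<circ> prod.swap) (keys n))"

lemma below_DA_iff: "below_DA n r F \<longleftrightarrow> (\<exists>D. lex_less_at (keys n) (F \<circ> r) (F \<circ> prod.swap) D)"
  unfolding below_DA_def lex_less_def by (rule lexord_map_iff_lex_less_at[OF sorted_keys])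

definition DA_above_others :: "nat \<Rightarrow> (nat \<Rightarrow> nat \<Rightarrow> nat) \<Rightarrow> bool" where
  "DA_above_others n f \<longleftrightarrow>
     lex_less (lam_CD n f) (lam_DA n f) \<and> lex_less (lam_AD n f) (lam_DA n f) \<and>
     lex_less (lam_CB n f) (lam_DA n f) \<and> lex_less (lam_AB n f) (lam_DA n f) \<and>
     lex_less (lam_BA n f) (lam_DA n f) \<and> lex_less (lam_BC n f) (lam_DA n f)"

lemma DA_above_others_iff:
  "DA_above_others n f \<longleftrightarrow>
     below_DA n (read_CD n) (case_prod f) \<and> below_DA n (read_AD n) (case_prod f) \<and>
     below_DA n (read_CB n) (case_prod f) \<and> below_DA n (read_AB n) (case_prod f) \<and>
     below_DA n (read_BA n) (case_prod f) \<and> below_DA n (read_BC n) (case_prod f)"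
  by (simp add: DA_above_others_def below_DA_def lam_DA_eq lam_AD_eq lam_AB_eq lam_BA_eq
      lam_BC_eq lam_CB_eq lam_CD_eq)

lemma asymmetric_below_DA:
  assumes "asymmetric n f"
  shows "below_DA n id (case_prod f)" and "DA_above_others n f"
  using assms by (simp_all add: asymmetric_def DA_above_others_def below_DA_def lam_DA_eq lam_DC_eq)

section \<open>The leading robots\<close>

definition first_robot :: "nat \<Rightarrow> (nat \<times> nat \<Rightarrow> nat) \<Rightarrow> nat \<times> nat \<Rightarrow> bool" where
  "first_robot n F p \<longleftrightarrow> p \<in> grid n \<and> F p \<noteq> 0 \<and>
     (\<forall>x\<in>grid n. prod.swap x < prod.swap p \<longrightarrow> F x = 0)"

definition next_robot :: "nat \<Rightarrow> (nat \<times> nat \<Rightarrow> nat) \<Rightarrow> nat \<times> nat \<Rightarrow> nat \<times> nat \<Rightarrow> bool" where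
  "next_robot n F p p' \<longleftrightarrow> p' \<in> grid n \<and> F p' \<noteq> 0 \<and> prod.swap p < prod.swap p' \<and>
     (\<forall>x\<in>grid n. prod.swap p < prod.swap x \<longrightarrow> prod.swap x < prod.swap p' \<longrightarrow> F x = 0)"

lemma next_robot_empty_before:
  assumes "first_robot n F p1" "next_robot n F p1 p2"
    and "x \<in> grid n" "prod.swap x < prod.swap p2" "x \<noteq> p1"
  shows "F x = 0"
proof -
  have "prod.swap x \<noteq> prod.swap p1" using assms(5) by (metis swap_swap)
  then consider "prod.swap x < prod.swap p1" | "prod.swap p1 < prod.swap x" using neq_iff by blast
  then show ?thesis using assms(1-4) unfolding first_robot_def next_robot_def by cases blast+
qed

lemma swap_in_grid [simp]: "prod.swap x \<in> grid n \<longleftrightarrow> x \<in> grid n"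
  by (cases x) (auto simp: grid_def)

lemma occupied_DA_eq: "occupied_DA n f = filter (\<lambda>(i, j). f i j \<noteq> 0) (map prod.swap (keys n))"
proof -
  have "map (\<lambda>(k, l). (l, k)) (keys n) = map prod.swap (keys n)"
    by (rule map_cong) auto
  then show ?thesis unfolding occupied_DA_def nodes_DA_def word_eq_map_keys by (simp only:)
qed

lemma leading_duo_cases:
  assumes duo: "p \<in> leading_duo n f" and x0: "x0 \<in> grid n" "case_prod f x0 \<noteq> 0"
  shows "first_robot n (case_prod f) p \<or>
    (\<exists>p1. first_robot n (case_prod f) p1 \<and> case_prod f p1 = 1 \<and> next_robot n (case_prod f) p1 p)"
proof -
  define F where "F = case_prod f"
  define os where "os = occupied_DA n f"
  have sorted: "sorted_wrt (\<lambda>x y. prod.swap x < prod.swap y) os"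
    using sorted_keys[of n] by (simp add: os_def occupied_DA_eq sorted_wrt_filter sorted_wrt_map)
  have set_os: "set os = {x \<in> grid n. F x \<noteq> 0}"
    by (simp add: os_def occupied_DA_eq F_def grid_def product_swap case_prod_beta)
  moreover have "x0 \<in> {x \<in> grid n. F x \<noteq> 0}" using x0 by (simp add: F_def)
  ultimately obtain p1 rest where os: "os = p1 # rest"
    by (metis empty_iff list.set(1) neq_Nil_conv)
  have before_p1: "x = p1 \<or> prod.swap p1 < prod.swap x" if "x \<in> grid n" "F x \<noteq> 0" for x
    using that set_os os sorted by auto
  have first: "first_robot n F p1"
    unfolding first_robot_def using set_os os before_p1 by (auto dest: less_asym)
  have duo_eq: "leading_duo n f = (if F p1 = 1 then set (take 2 os) else {p1})"
    by (simp add: leading_duo_def Let_def os_def[symmetric] os F_def case_prod_beta)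
  show ?thesis
  proof (cases "p = p1")
    case False
    then obtain rest' where F1: "F p1 = 1" and rest: "rest = p # rest'"
      using duo duo_eq os by (cases rest) (auto split: if_splits)
    have "x = p1 \<or> x = p \<or> prod.swap p < prod.swap x" if "x \<in> grid n" "F x \<noteq> 0" for x
      using that set_os os rest sorted by auto
    moreover have "p \<in> grid n" "F p \<noteq> 0" "prod.swap p1 < prod.swap p"
      using set_os os rest sorted by auto
    ultimately have "next_robot n F p1 p"
      unfolding next_robot_def by (auto dest: less_asym)
    then show ?thesis using first F1 F_def by blast
  qed (use first F_def in blast)
qed

lemma cap_move:
  fixes F F' :: "nat \<times> nat \<Rightarrow> nat"
  assumes "p \<noteq> q" "F = case_prod (cap c)" "F' = case_prod (cap (move c p q))"
  shows "\<forall>x. x \<noteq> q \<longrightarrow> F' x \<le> F x" and "\<forall>x. x \<noteq> p \<longrightarrow> x \<noteq> q \<longrightarrow> F' x = F x"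
    and "F q \<le> 1 \<Longrightarrow> F q < F' q" and "F p \<le> 1 \<Longrightarrow> F' p = 0" and "F q = 0 \<Longrightarrow> F' q = 1"
  using assms by (auto simp: cap_def move_def case_prod_beta)

lemma first_robot_leads_reading:
  assumes bij: "grid_bij n r \<kappa>" and below: "below_DA n r F" and first: "first_robot n F p1"
  shows "\<forall>x\<in>grid n. \<kappa> x < prod.swap p1 \<longrightarrow> F x = 0" and "F (r (prod.swap p1)) \<le> F p1"
proof -
  obtain D where D: "lex_less_at (keys n) (F \<circ> r) (F \<circ> prod.swap) D"
    using below below_DA_iff by blast
  have "\<not> D < prod.swap p1"
  proof
    assume "D < prod.swap p1"
    then have "F (prod.swap D) = 0" using first D by (simp add: first_robot_def lex_less_at_def)
    then show False using D by (simp add: lex_less_at_def)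
  qed
  then have agree: "F (r K) = F (prod.swap K)" if "K \<in> grid n" "K < prod.swap p1" for K
    using D that \<open>\<not> D < prod.swap p1\<close> by (simp add: lex_less_at_def not_less)
  show "\<forall>x\<in>grid n. \<kappa> x < prod.swap p1 \<longrightarrow> F x = 0"
  proof (intro ballI impI)
    fix x assume "x \<in> grid n" "\<kappa> x < prod.swap p1"
    moreover have "\<kappa> x \<in> grid n" "r (\<kappa> x) = x" using bij \<open>x \<in> grid n\<close> by (simp_all add: grid_bij_def)
    ultimately show "F x = 0" using agree[of "\<kappa> x"] first by (simp add: first_robot_def)
  qed
  show "F (r (prod.swap p1)) \<le> F p1"
  proof (cases "D = prod.swap p1")
    case True
    then show ?thesis using D by (simp add: lex_less_at_def)
  next
    case False
    then have "prod.swap p1 < D" using \<open>\<not> D < prod.swap p1\<close> by simp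
    then show ?thesis using D first by (simp add: lex_less_at_def first_robot_def)
  qed
qed

text \<open>A boundary robot is met on the first line of DC, AB, DA or BC, and no reading meets it
  before DA meets the first robot.\<close>
lemma first_robot_on_side_DA:
  assumes valid: "valid_config n f" and asym: "asymmetric n f"
    and first: "first_robot n (case_prod f) p1"
  obtains m i1 where "n = 2 * m" "p1 = (i1, 1)" "2 \<le> i1" "i1 \<le> m"
proof -
  define F where "F = case_prod f"
  have DC: "below_DA n id F" and AD: "below_DA n (read_AD n) F"
    and AB: "below_DA n (read_AB n) F" and BC: "below_DA n (read_BC n) F"
    using asymmetric_below_DA[OF asym] by (simp_all add: DA_above_others_iff F_def)
  have lead: "\<not> \<kappa> x < prod.swap p1"
    if "grid_bij n r \<kappa>" "below_DA n r F" "x \<in> grid n" "F x \<noteq> 0" for r \<kappa> x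
    using first_robot_leads_reading(1)[OF that(1,2) first[folded F_def]] that(3,4) by auto
  obtain i1 j1 where p1: "p1 = (i1, j1)" by (cases p1)
  have p1_grid: "1 \<le> i1" "i1 \<le> n" "1 \<le> j1" using first p1 by (auto simp: first_robot_def grid_def)
  obtain a b where "a \<in> {1..n}" "b \<in> {1..n}" "a = 1 \<or> a = n \<or> b = 1 \<or> b = n" "f a b \<noteq> 0"
    using valid unfolding valid_config_def by blast
  then have ab: "(a, b) \<in> grid n" "a = 1 \<or> a = n \<or> b = 1 \<or> b = n" "F (a, b) \<noteq> 0"
    by (simp_all add: grid_def F_def)
  have "\<exists>t. \<not> (1, t) < (j1, i1)"
    using ab(2)
  proof (elim disjE)
    assume "a = 1" then show ?thesis using lead[OF grid_bij_DC DC ab(1,3)] p1 by auto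
  next
    assume "a = n" then show ?thesis using lead[OF grid_bij_AB AB ab(1,3)] p1 by (auto simp: read_AB_def)
  next
    assume "b = 1" then show ?thesis using first ab(1,3) p1 by (auto simp: first_robot_def F_def)
  next
    assume "b = n" then show ?thesis using lead[OF grid_bij_BC BC ab(1,3)] p1 by (auto simp: read_BC_def)
  qed
  then have j1: "j1 = 1" using p1_grid by auto
  obtain m where n: "n = 2 * m" using valid by (auto simp: valid_config_def elim: evenE)
  have "f i1 1 \<noteq> 0" using first p1 j1 by (simp add: first_robot_def)
  then have i1: "2 \<le> i1" "i1 < n" using valid p1_grid by (auto simp: valid_config_def le_less)
  have "\<not> key_AD n p1 < prod.swap p1"
    using lead[OF grid_bij_AD AD] first by (simp add: first_robot_def F_def)
  then have "i1 \<le> m" using p1 j1 n i1 by (auto simp: key_AD_def)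
  then show thesis using that n p1 j1 i1 by blast
qed

lemma below_DA_after_move:
  assumes bij: "grid_bij n r \<kappa>" and below: "below_DA n r F" and q: "q \<in> grid n"
    and lower: "\<forall>x\<in>grid n. x \<noteq> q \<longrightarrow> F' x \<le> F x"
    and keep: "\<forall>x\<in>grid n. prod.swap x < prod.swap q \<longrightarrow> F' x = F x"
    and raise: "F q < F' q"
    and early: "prod.swap q < \<kappa> q \<or> (\<exists>D. lex_less_at (keys n) (F \<circ> r) (F \<circ> prod.swap) D \<and> D < \<kappa> q)"
  shows "below_DA n r F'"
proof -
  obtain D where D: "lex_less_at (keys n) (F \<circ> r) (F \<circ> prod.swap) D" "min (prod.swap q) D < \<kappa> q"
    using early below unfolding below_DA_iff by (meson min.strict_coboundedI1 min.strict_coboundedI2)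
  show ?thesis
    unfolding below_DA_def lex_less_def
  proof (rule lexord_map_lower_raise[OF sorted_keys D(1) _ _ _ _ D(2)])
    show "\<forall>K\<in>set (keys n). K \<noteq> \<kappa> q \<longrightarrow> (F' \<circ> r) K \<le> (F \<circ> r) K"
      using bij lower unfolding grid_bij_def by (metis comp_apply set_keys)
    show "\<forall>K\<in>set (keys n). K < prod.swap q \<longrightarrow> (F' \<circ> prod.swap) K = (F \<circ> prod.swap) K"
      using keep by simp
    show "prod.swap q \<in> set (keys n)" using q by simp
    show "(F \<circ> prod.swap) (prod.swap q) < (F' \<circ> prod.swap) (prod.swap q)" using raise by simp
  qed
qed

lemma reading_ties_first_robot:
  assumes below: "below_DA n r F" and first: "first_robot n F p1" and second: "next_robot n F p1 p2"
    and tie: "F p1 \<le> F (r (prod.swap p1))"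
  shows "\<forall>K\<in>grid n. prod.swap p1 < K \<longrightarrow> K < prod.swap p2 \<longrightarrow> F (r K) = 0"
proof -
  obtain D where D: "lex_less_at (keys n) (F \<circ> r) (F \<circ> prod.swap) D"
    using below below_DA_iff by blast
  then have D_grid: "prod.swap D \<in> grid n" and occupied: "F (prod.swap D) \<noteq> 0"
    by (auto simp: lex_less_at_def)
  have "\<not> D < prod.swap p1" using first D_grid occupied by (auto simp: first_robot_def)
  moreover have "D \<noteq> prod.swap p1" using D tie by (auto simp: lex_less_at_def)
  moreover have "\<not> (prod.swap p1 < D \<and> D < prod.swap p2)"
    using second D_grid occupied by (auto simp: next_robot_def)
  ultimately have "prod.swap p2 \<le> D" by auto
  then show ?thesis
    using D second by (auto simp: lex_less_at_def next_robot_def)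
qed

text \<open>Conditions under which moving the second robot from \<open>p2\<close> to \<open>q\<close> keeps reading \<open>r\<close>
  below DA: either DA reaches \<open>q\<close> before \<open>r\<close> does, or \<open>r\<close> reaches \<open>q\<close> only after the DA-key of
  the first robot \<open>p1\<close>, and at that key \<open>r\<close> either sees the vacated node \<open>p2\<close> or cannot tie with
  DA, because a tie would force \<open>p1\<close> or \<open>p2\<close> into a stretch that is empty for \<open>r\<close>.\<close>
definition harmless_move ::
    "(nat \<times> nat \<Rightarrow> nat \<times> nat) \<Rightarrow> (nat \<times> nat \<Rightarrow> nat \<times> nat) \<Rightarrow> nat \<times> nat \<Rightarrow> nat \<times> nat \<Rightarrow> nat \<times> nat \<Rightarrow> bool" where
  "harmless_move r \<kappa> p1 p2 q \<longleftrightarrow> prod.swap q < \<kappa> q \<or>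
     (prod.swap p1 < \<kappa> q \<and>
       (r (prod.swap p1) = p2 \<or>
        (prod.swap p1 < \<kappa> p1 \<and> \<kappa> p1 < prod.swap p2) \<or>
        (prod.swap p1 < \<kappa> p2 \<and> \<kappa> p2 < prod.swap p2)))"

lemma below_DA_after_second_move:
  assumes bij: "grid_bij n r \<kappa>" and below: "below_DA n r F" and q: "q \<in> grid n"
    and lower: "\<forall>x\<in>grid n. x \<noteq> q \<longrightarrow> F' x \<le> F x"
    and other: "\<forall>x\<in>grid n. x \<noteq> p2 \<longrightarrow> x \<noteq> q \<longrightarrow> F' x = F x"
    and raise: "F q < F' q"
    and first: "first_robot n F p1" "F p1 = 1"
    and second: "next_robot n F p1 p2" "q \<noteq> p2" "F p2 \<le> 1 \<Longrightarrow> F' p2 = 0"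
    and q_before: "prod.swap q < prod.swap p2"
    and harmless: "harmless_move r \<kappa> p1 p2 q"
  shows "below_DA n r F'"
proof -
  let ?E = "prod.swap p1"
  have E: "?E \<in> grid n" using first by (simp add: first_robot_def)
  have keep: "\<forall>x\<in>grid n. prod.swap x < prod.swap q \<longrightarrow> F' x = F x"
    using other q_before by (metis less_asym order.strict_trans)
  note move = below_DA_after_move[OF bij below q lower keep raise]
  have zero_before: "\<forall>K\<in>grid n. K < ?E \<longrightarrow> F (r K) = 0"
    using first_robot_leads_reading(1)[OF bij below first(1)] bij unfolding grid_bij_def by metis
  have at_E: "F (r ?E) \<le> 1" using first_robot_leads_reading(2)[OF bij below first(1)] first(2) by simp
  show ?thesis
  proof (cases "prod.swap q < \<kappa> q")
    case True
    then show ?thesis using move by blast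
  next
    case False
    then have E_q: "?E < \<kappa> q" and cases: "r ?E = p2 \<or> (?E < \<kappa> p1 \<and> \<kappa> p1 < prod.swap p2) \<or>
        (?E < \<kappa> p2 \<and> \<kappa> p2 < prod.swap p2)"
      using harmless by (auto simp: harmless_move_def)
    txt \<open>If \<open>r\<close> sees nothing at the DA-key of \<open>p1\<close>, it loses to DA there, before meeting \<open>q\<close>;
      otherwise it ties with DA up to \<open>p2\<close>, which leaves only the vacated-node case.\<close>
    show ?thesis
    proof (cases "F (r ?E) = 0")
      case True
      have "lex_less_at (keys n) (F \<circ> r) (F \<circ> prod.swap) ?E"
        using E zero_before first True by (auto simp: lex_less_at_def first_robot_def)
      then show ?thesis using move E_q by blast
    next
      case False
      then have "F (r ?E) = 1" using at_E by simp
      then have tie: "\<forall>K\<in>grid n. ?E < K \<longrightarrow> K < prod.swap p2 \<longrightarrow> F (r K) = 0"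
        using reading_ties_first_robot[OF below first(1) second(1)] first(2) by simp
      have grid: "\<kappa> p1 \<in> grid n" "r (\<kappa> p1) = p1" "\<kappa> p2 \<in> grid n" "r (\<kappa> p2) = p2"
        using bij first(1) second(1) E by (auto simp: grid_bij_def first_robot_def next_robot_def)
      have "\<not> (?E < \<kappa> p1 \<and> \<kappa> p1 < prod.swap p2)" using tie grid first(2) by force
      moreover have "\<not> (?E < \<kappa> p2 \<and> \<kappa> p2 < prod.swap p2)"
        using tie grid second(1) by (force simp: next_robot_def)
      ultimately have "r ?E = p2" using cases by blast
      then have "F' (r ?E) = 0" using at_E second(3) by simp
      moreover have "0 < F' p1"
        using first other raise second(1) by (cases "p1 = q") (auto simp: first_robot_def next_robot_def)
      moreover have "\<forall>K\<in>grid n. K < ?E \<longrightarrow> F' (r K) = 0"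
        using zero_before lower bij E_q unfolding grid_bij_def by (metis le_zero_eq order.strict_trans less_irrefl)
      ultimately show ?thesis
        unfolding below_DA_def lex_less_def
        by (intro lexord_mapI[OF sorted_keys, of ?E]) (use E in auto)
    qed
  qed
qed

section \<open>Geometry of the second robot's move\<close>

lemma harmless_move_early: "prod.swap q < \<kappa> q \<Longrightarrow> harmless_move r \<kappa> p1 p2 q"
  by (simp add: harmless_move_def)
lemma harmless_move_vacated:
  "prod.swap p1 < \<kappa> q \<Longrightarrow> r (prod.swap p1) = p2 \<Longrightarrow> harmless_move r \<kappa> p1 p2 q"
  by (simp add: harmless_move_def)
lemma harmless_move_first_between:
  "prod.swap p1 < \<kappa> q \<Longrightarrow> prod.swap p1 < \<kappa> p1 \<Longrightarrow> \<kappa> p1 < prod.swap p2 \<Longrightarrow> harmless_move r \<kappa> p1 p2 q"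
  by (simp add: harmless_move_def)
lemma harmless_move_second_between:
  "prod.swap p1 < \<kappa> q \<Longrightarrow> prod.swap p1 < \<kappa> p2 \<Longrightarrow> \<kappa> p2 < prod.swap p2 \<Longrightarrow> harmless_move r \<kappa> p1 p2 q"
  by (simp add: harmless_move_def)

text \<open>Coordinates of the two leading robots \<open>p1 = (i1, 1)\<close> and \<open>p2 = (i2, j2)\<close>; the hypotheses
  \<open>after_XY\<close> say that reading XY reaches \<open>p2\<close> no earlier than DA reaches \<open>p1\<close>.\<close>
locale leading_pair =
  fixes n m i1 i2 j2 :: nat
  assumes n_even: "n = 2 * m" and p1_range: "2 \<le> i1" "i1 \<le> m"
    and p2_range: "1 \<le> i2" "i2 \<le> n" "1 \<le> j2" "j2 \<le> n"
    and p2_not_corner: "\<not> ((i2 = 1 \<or> i2 = n) \<and> (j2 = 1 \<or> j2 = n))"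
    and after_DA: "j2 = 1 \<longrightarrow> i1 < i2"
    and after_DC: "i2 = 1 \<longrightarrow> i1 \<le> j2" and after_AD: "j2 = 1 \<longrightarrow> i1 + i2 \<le> n + 1"
    and after_AB: "i2 = n \<longrightarrow> i1 \<le> j2" and after_BA: "i2 = n \<longrightarrow> i1 + j2 \<le> n + 1"
    and after_BC: "j2 = n \<longrightarrow> i1 + i2 \<le> n + 1" and after_CB: "j2 = n \<longrightarrow> i1 \<le> i2"
    and after_CD: "i2 = 1 \<longrightarrow> i1 + j2 \<le> n + 1"
begin

lemma m_ge: "2 \<le> m" "4 \<le> n" using n_even p1_range by auto

lemmas bounds = n_even p1_range p2_range m_ge

lemma target_cases:
  obtains (along_DA) "j2 = 1" "i1 < i2" "i1 + i2 \<le> n + 1" "i2 < n" "alg2_target n (i2, j2) = (i2 - 1, 1)"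
  | (along_line2) "j2 = 2" "i2 > 2" "i2 = n \<longrightarrow> i1 = 2" "alg2_target n (i2, j2) = (i2 - 1, 2)"
  | (along_AB) "i2 = n" "3 \<le> j2" "j2 \<le> m" "i1 \<le> j2" "alg2_target n (i2, j2) = (n - 1, j2)"
  | (to_DA) "j2 = 2" "i2 \<le> 2" "alg2_target n (i2, j2) = (i2, 1)"
  | (leftwards) "3 \<le> j2" "i2 = n \<longrightarrow> m < j2" "alg2_target n (i2, j2) = (i2, j2 - 1)"
proof -
  have half: "n div 2 = m" using n_even by simp
  consider "j2 = 1" | "j2 = 2" "i2 > 2" | "i2 = n" "3 \<le> j2" "j2 \<le> m" | "j2 = 2" "i2 \<le> 2"
    | "3 \<le> j2" "i2 = n \<longrightarrow> m < j2"
    using p2_range by linarith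
  then show thesis
  proof cases
    case 1 then show ?thesis
      using along_DA after_DA after_AD p2_not_corner p2_range by (simp add: alg2_target_def)
  next
    case 2 then show ?thesis using along_line2 after_AB p1_range by (auto simp: alg2_target_def)
  next
    case 3 then show ?thesis using along_AB after_AB half by (simp add: alg2_target_def)
  next
    case 4 then show ?thesis using to_DA bounds by (simp add: alg2_target_def)
  next
    case 5 then show ?thesis using leftwards half by (auto simp: alg2_target_def)
  qed
qed

lemma target_before_p2:
  "alg2_target n (i2, j2) \<in> grid n \<and> prod.swap (alg2_target n (i2, j2)) < (j2, i2)"
  by (cases rule: target_cases) (use bounds in \<open>simp add: grid_def; arith?\<close>)+

lemma harmless_move_AD: "harmless_move (read_AD n) (key_AD n) (i1, 1) (i2, j2) (alg2_target n (i2, j2))"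
proof (cases rule: target_cases)
  case along_DA
  consider "2*i2 \<le> n+2" | "2*i2 > n+2" "i1+i2 = n+1" | "2*i2 > n+2" "i1+i2 \<noteq> n+1" by linarith
  then show ?thesis
  proof cases
    case 1 then show ?thesis using bounds along_DA by (intro harmless_move_early; simp add: key_AD_def; arith?)
  next
    case 2 then show ?thesis using bounds along_DA by (intro harmless_move_vacated; simp add: key_AD_def read_AD_def; arith?)
  next
    case 3 then show ?thesis using bounds along_DA by (intro harmless_move_second_between; simp add: key_AD_def read_AD_def; arith?)
  qed
next
  case along_line2 then show ?thesis using bounds by (intro harmless_move_first_between; simp add: key_AD_def; arith?)
next
  case along_AB then show ?thesis using bounds by (intro harmless_move_first_between; simp add: key_AD_def; arith?)
next
  case to_DA then show ?thesis using bounds by (intro harmless_move_early; simp add: key_AD_def; arith?)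
next
  case leftwards
  consider "2*i2 \<le> n" | "2*i2 > n" by linarith
  then show ?thesis
  proof cases
    case 1 then show ?thesis using bounds leftwards by (intro harmless_move_early; simp add: key_AD_def; arith?)
  next
    case 2 then show ?thesis using bounds leftwards by (intro harmless_move_first_between; simp add: key_AD_def; arith?)
  qed
qed

lemma harmless_move_AB: "harmless_move (read_AB n) (read_AB n) (i1, 1) (i2, j2) (alg2_target n (i2, j2)) \<or> (i2 = n \<and> j2 = m + 1 \<and> i1 = m)"
proof (cases rule: target_cases)
  case along_DA then show ?thesis using bounds by (intro disjI1 harmless_move_early; simp add: read_AB_def; arith?)
next
  case along_line2
  consider "i2 < n" | "i2 = n" using bounds by linarith
  then show ?thesis
  proof cases
    case 1 then show ?thesis using bounds along_line2 by (intro disjI1 harmless_move_early; simp add: read_AB_def; arith?)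
  next
    case 2 then show ?thesis using bounds along_line2 by (intro disjI1 harmless_move_vacated; simp add: read_AB_def; arith?)
  qed
next
  case along_AB
  consider "j2 = i1" | "i1 < j2" using along_AB by linarith
  then show ?thesis
  proof cases
    case 1 then show ?thesis using bounds along_AB by (intro disjI1 harmless_move_vacated; simp add: read_AB_def; arith?)
  next
    case 2 then show ?thesis using bounds along_AB by (intro disjI1 harmless_move_second_between; simp add: read_AB_def; arith?)
  qed
next
  case to_DA then show ?thesis using bounds by (intro disjI1 harmless_move_early; simp add: read_AB_def; arith?)
next
  case leftwards
  consider "i2+j2 \<le> n+1 \<or> (i2+j2 = n+2 \<and> i2 < j2-1)" | "i2 = n" "j2 = m+1" "i1 = m"
    | "\<not> (i2+j2 \<le> n+1 \<or> (i2+j2 = n+2 \<and> i2 < j2-1))" "i2 < n"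
    | "\<not> (i2+j2 \<le> n+1 \<or> (i2+j2 = n+2 \<and> i2 < j2-1))" "i2 = n" "i1 + 1 < j2"
    using leftwards bounds by linarith
  then show ?thesis
  proof cases
    case 1 then show ?thesis using bounds leftwards by (intro disjI1 harmless_move_early; simp add: read_AB_def; arith?)
  next
    case 2 then show ?thesis by blast
  next
    case 3 then show ?thesis using bounds leftwards by (intro disjI1 harmless_move_second_between; simp add: read_AB_def; arith?)
  next
    case 4 then show ?thesis using bounds leftwards by (intro disjI1 harmless_move_second_between; simp add: read_AB_def; arith?)
  qed
qed

lemma harmless_move_BA: "harmless_move (read_BA n) (read_BA n) (i1, 1) (i2, j2) (alg2_target n (i2, j2))"
proof (cases rule: target_cases)
  case along_DA then show ?thesis using bounds by (intro harmless_move_early; simp add: read_BA_def; arith?)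
next
  case along_line2
  consider "i2 < n" | "i2 = n" using bounds by linarith
  then show ?thesis
  proof cases
    case 1 then show ?thesis using bounds along_line2 by (intro harmless_move_early; simp add: read_BA_def; arith?)
  next
    case 2 then show ?thesis using bounds along_line2 by (intro harmless_move_second_between; simp add: read_BA_def; arith?)
  qed
next
  case along_AB then show ?thesis using bounds by (intro harmless_move_second_between; simp add: read_BA_def; arith?)
next
  case to_DA then show ?thesis using bounds by (intro harmless_move_early; simp add: read_BA_def; arith?)
next
  case leftwards
  consider "i2+j2 \<le> n+1" | "i2 = n" "i1 + j2 = n+1" | "i2+j2 > n+1" "i2 < n"
    | "i2+j2 > n+1" "i2 = n" "i1 + j2 < n+1"
    using leftwards bounds after_BA by linarith
  then show ?thesis
  proof cases
    case 1 then show ?thesis using bounds leftwards by (intro harmless_move_early; simp add: read_BA_def; arith?)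
  next
    case 2 then show ?thesis using bounds leftwards by (intro harmless_move_vacated; simp add: read_BA_def; arith?)
  next
    case 3 then show ?thesis using bounds leftwards by (intro harmless_move_second_between; simp add: read_BA_def; arith?)
  next
    case 4 then show ?thesis using bounds leftwards by (intro harmless_move_second_between; simp add: read_BA_def; arith?)
  qed
qed

lemma harmless_move_BC: "harmless_move (read_BC n) (read_BC n) (i1, 1) (i2, j2) (alg2_target n (i2, j2))"
proof (cases rule: target_cases)
  case along_DA then show ?thesis using bounds by (intro harmless_move_early; simp add: read_BC_def; arith?)
next
  case along_line2 then show ?thesis using bounds by (intro harmless_move_early; simp add: read_BC_def; arith?)
next
  case along_AB then show ?thesis using bounds by (intro harmless_move_early; simp add: read_BC_def; arith?)
next
  case to_DA then show ?thesis using bounds by (intro harmless_move_early; simp add: read_BC_def; arith?)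
next
  case leftwards
  consider "2*j2 \<le> n+2" | "j2 = n" "i1 + i2 = n+1" | "2*j2 > n+2" "j2 < n"
    | "2*j2 > n+2" "j2 = n" "i1 + i2 < n+1"
    using leftwards bounds after_BC by linarith
  then show ?thesis
  proof cases
    case 1 then show ?thesis using bounds leftwards by (intro harmless_move_early; simp add: read_BC_def; arith?)
  next
    case 2 then show ?thesis using bounds leftwards by (intro harmless_move_vacated; simp add: read_BC_def; arith?)
  next
    case 3 then show ?thesis using bounds leftwards by (intro harmless_move_second_between; simp add: read_BC_def; arith?)
  next
    case 4 then show ?thesis using bounds leftwards by (intro harmless_move_second_between; simp add: read_BC_def; arith?)
  qed
qed

lemma harmless_move_CB: "harmless_move (read_CB n) (key_CB n) (i1, 1) (i2, j2) (alg2_target n (i2, j2))"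
proof (cases rule: target_cases)
  case along_DA then show ?thesis using bounds by (intro harmless_move_early; simp add: key_CB_def; arith?)
next
  case along_line2 then show ?thesis using bounds by (intro harmless_move_early; simp add: key_CB_def; arith?)
next
  case along_AB then show ?thesis using bounds by (intro harmless_move_early; simp add: key_CB_def; arith?)
next
  case to_DA then show ?thesis using bounds by (intro harmless_move_early; simp add: key_CB_def; arith?)
next
  case leftwards
  consider "2*j2 \<le> n+2" | "j2 = n" "i1 = i2" | "2*j2 > n+2" "j2 < n"
    | "2*j2 > n+2" "j2 = n" "i1 < i2"
    using leftwards bounds after_CB by linarith
  then show ?thesis
  proof cases
    case 1 then show ?thesis using bounds leftwards by (intro harmless_move_early; simp add: key_CB_def; arith?)
  next
    case 2 then show ?thesis using bounds leftwards by (intro harmless_move_vacated; simp add: key_CB_def read_CB_def; arith?)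
  next
    case 3 then show ?thesis using bounds leftwards by (intro harmless_move_second_between; simp add: key_CB_def; arith?)
  next
    case 4 then show ?thesis using bounds leftwards by (intro harmless_move_second_between; simp add: key_CB_def; arith?)
  qed
qed

lemma harmless_move_CD: "harmless_move (read_CD n) (read_CD n) (i1, 1) (i2, j2) (alg2_target n (i2, j2))"
proof (cases rule: target_cases)
  case along_DA then show ?thesis using bounds by (intro harmless_move_early; simp add: read_CD_def; arith?)
next
  case along_line2 then show ?thesis using bounds by (intro harmless_move_early; simp add: read_CD_def; arith?)
next
  case along_AB then show ?thesis using bounds by (intro harmless_move_early; simp add: read_CD_def; arith?)
next
  case to_DA then show ?thesis using bounds by (intro harmless_move_early; simp add: read_CD_def; arith?)
next
  case leftwards
  show ?thesis
  proof (cases "j2 \<le> i2 \<or> (j2 = i2+1 \<and> i2 + j2 < n+2)")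
    case True then show ?thesis using bounds leftwards by (intro harmless_move_early; simp add: read_CD_def; arith?)
  next
    case False
    then have beyond_diagonal: "i2 + 1 \<le> j2" "n+2 \<le> i2 + j2 \<or> i2 + 1 < j2" by auto
    have off_DC: "1 < i2 \<or> i1 + j2 \<le> n+1" using after_CD p2_range by auto
    show ?thesis
    proof (cases "i1 < j2")
      case True then show ?thesis using bounds leftwards beyond_diagonal off_DC by (intro harmless_move_first_between; simp add: read_CD_def; arith?)
    next
      case False then show ?thesis using bounds leftwards beyond_diagonal off_DC by (intro harmless_move_second_between; simp add: read_CD_def; arith?)
    qed
  qed
qed

end

text \<open>The one configuration not covered by \<open>harmless_move_AB\<close>: \<open>p1 = (m, 1)\<close>, \<open>p2 = (n, m + 1)\<close>,
  \<open>q = (n, m)\<close>. Here the comparison is decided at key \<open>(m, n)\<close>, where DA now sees the robot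
  at \<open>q\<close> and AB an empty node.\<close>
lemma below_DA_AB_exceptional:
  assumes n: "n = 2 * m" "2 \<le> m" and BA: "below_DA n (read_BA n) F"
    and first: "first_robot n F (m, 1)" "F (m, 1) = 1" and second: "next_robot n F (m, 1) (n, m + 1)"
    and lower: "\<forall>x\<in>grid n. x \<noteq> (n, m) \<longrightarrow> F' x \<le> F x"
    and other: "\<forall>x\<in>grid n. x \<noteq> (n, m + 1) \<longrightarrow> x \<noteq> (n, m) \<longrightarrow> F' x = F x"
    and gain: "F (n, m) = 0 \<Longrightarrow> F' (n, m) = 1" and leave: "F (n, m + 1) \<le> 1 \<Longrightarrow> F' (n, m + 1) = 0"
  shows "below_DA n (read_AB n) F'"
proof -
  have BA_p1: "read_BA n (1, m) = (n, m + 1)" using n by (simp add: read_BA_def)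
  have tie: "\<forall>K\<in>grid n. (1, m) < K \<longrightarrow> K < (m + 1, n) \<longrightarrow> F (read_BA n K) = 0"
    using reading_ties_first_robot[OF BA first(1) second] first(2) second BA_p1
    by (simp add: next_robot_def)
  have BA_before: "\<forall>x\<in>grid n. read_BA n x < (1, m) \<longrightarrow> F x = 0"
    using first_robot_leads_reading(1)[OF grid_bij_BA BA first(1)] by simp
  have "F (n, m + 1) \<le> 1"
    using first_robot_leads_reading(2)[OF grid_bij_BA BA first(1)] first(2) BA_p1 by simp
  then have F'_p2: "F' (n, m + 1) = 0" by (rule leave)
  have F'_p1: "F' (m, 1) = 1" using other first n by (simp add: first_robot_def)
  have "F (n, m) = 0"
    using next_robot_empty_before[OF first(1) second, of "(n, m)"] n by (simp add: grid_def)
  then have F'_q: "F' (n, m) = 1" by (rule gain)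
  have empty: "F' x = 0" if x: "x = (n + 1 - k, l)" "1 \<le> k" "k \<le> m" "1 \<le> l" "l \<le> n" "x \<noteq> (n, m)" for x k l
  proof (cases "x = (n, m + 1)")
    case False
    have x_grid: "x \<in> grid n" using x n by (simp add: grid_def; arith)
    have key: "read_BA n x = (k, n + 1 - l)" "read_BA n x \<in> grid n" using x n by (auto simp: read_BA_def grid_def)
    consider "read_BA n x < (1, m)" | "read_BA n x = (1, m)" | "(1, m) < read_BA n x" by fastforce
    then have "F x = 0"
    proof cases
      case 1 then show ?thesis using BA_before x_grid by blast
    next
      case 2 then show ?thesis using False key(1) x n by auto
    next
      case 3
      have "read_BA n x < (m + 1, n)" using key(1) x by simp
      then have "F (read_BA n (read_BA n x)) = 0" using tie key(2) 3 by blast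
      then show ?thesis using x n by (simp add: read_BA_def)
    qed
    then show ?thesis using lower x_grid x(6) by (metis le_zero_eq)
  qed (use F'_p2 in simp)
  show ?thesis
    unfolding below_DA_def lex_less_def
  proof (rule lexord_mapI[OF sorted_keys, of "(m, n)"])
    show "(m, n) \<in> set (keys n)" using n by (simp add: grid_def)
    show "\<forall>K\<in>set (keys n). K < (m, n) \<longrightarrow> (F' \<circ> read_AB n) K \<le> (F' \<circ> prod.swap) K"
    proof (intro ballI impI)
      fix K assume K: "K \<in> set (keys n)" "K < (m, n)"
      obtain k l where K_kl: "K = (k, l)" by (cases K)
      then have kl: "1 \<le> k" "k \<le> m" "1 \<le> l" "l \<le> n" using K by (auto simp: grid_def)
      show "(F' \<circ> read_AB n) K \<le> (F' \<circ> prod.swap) K"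
      proof (cases "K = (1, m)")
        case True
        then show ?thesis using F'_q F'_p1 n by (simp add: read_AB_def)
      next
        case False
        then have "read_AB n K \<noteq> (n, m)" using K_kl kl n by (auto simp: read_AB_def)
        then show ?thesis using empty[of "read_AB n K" k l] K_kl kl by (simp add: read_AB_def)
      qed
    qed
    have "F' (m + 1, n) = 0" using empty[of "(m + 1, n)" m n] n by simp
    then show "(F' \<circ> read_AB n) (m, n) < (F' \<circ> prod.swap) (m, n)"
      using F'_q n by (simp add: read_AB_def)
  qed
qed

lemma leading_pair_of_robots:
  assumes valid: "valid_config n f" and asym: "asymmetric n f"
    and n: "n = 2 * m" and i1: "2 \<le> i1" "i1 \<le> m"
    and first: "first_robot n (case_prod f) (i1, 1)"
    and second: "next_robot n (case_prod f) (i1, 1) (i2, j2)"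
  shows "leading_pair n m i1 i2 j2"
proof -
  define F where "F = case_prod f"
  have DC: "below_DA n id F" and others: "DA_above_others n f"
    using asymmetric_below_DA[OF asym] by (simp_all add: F_def)
  have lead: "\<not> \<kappa> (i2, j2) < (1, i1)" if "grid_bij n r \<kappa>" "below_DA n r F" for r \<kappa>
    using first_robot_leads_reading(1)[OF that first[folded F_def]] second
    by (auto simp: next_robot_def F_def)
  have p2: "1 \<le> i2" "i2 \<le> n" "1 \<le> j2" "j2 \<le> n" "f i2 j2 \<noteq> 0" "(1, i1) < (j2, i2)"
    using second by (auto simp: next_robot_def grid_def)
  have after_DC: "i2 = 1 \<longrightarrow> i1 \<le> j2" using lead[OF grid_bij_DC DC] by auto
  have "\<not> key_AD n (i2, j2) < (1, i1)" using lead[OF grid_bij_AD] others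
    by (simp add: DA_above_others_iff F_def)
  then have after_AD: "j2 = 1 \<longrightarrow> i1 + i2 \<le> n + 1" using p2 by (auto simp: key_AD_def)
  have "\<not> read_AB n (i2, j2) < (1, i1)" using lead[OF grid_bij_AB] others
    by (simp add: DA_above_others_iff F_def)
  then have after_AB: "i2 = n \<longrightarrow> i1 \<le> j2" by (auto simp: read_AB_def)
  have "\<not> read_BA n (i2, j2) < (1, i1)" using lead[OF grid_bij_BA] others
    by (simp add: DA_above_others_iff F_def)
  then have after_BA: "i2 = n \<longrightarrow> i1 + j2 \<le> n + 1" using p2 by (auto simp: read_BA_def)
  have "\<not> read_BC n (i2, j2) < (1, i1)" using lead[OF grid_bij_BC] others
    by (simp add: DA_above_others_iff F_def)
  then have after_BC: "j2 = n \<longrightarrow> i1 + i2 \<le> n + 1" using p2 by (auto simp: read_BC_def)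
  have "\<not> key_CB n (i2, j2) < (1, i1)" using lead[OF grid_bij_CB] others
    by (simp add: DA_above_others_iff F_def)
  then have after_CB: "j2 = n \<longrightarrow> i1 \<le> i2" by (auto simp: key_CB_def)
  have "\<not> read_CD n (i2, j2) < (1, i1)" using lead[OF grid_bij_CD] others
    by (simp add: DA_above_others_iff F_def)
  then have after_CD: "i2 = 1 \<longrightarrow> i1 + j2 \<le> n + 1" using p2 by (auto simp: read_CD_def)
  have after_DA: "j2 = 1 \<longrightarrow> i1 < i2" using p2 by auto
  have "\<not> ((i2 = 1 \<or> i2 = n) \<and> (j2 = 1 \<or> j2 = n))"
    using valid p2(5) by (auto simp: valid_config_def)
  then show ?thesis
    unfolding leading_pair_def using n i1 p2(1-4) after_DA after_DC after_AD after_AB after_BA after_BC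
      after_CB after_CD by blast
qed

lemma move_first_robot:
  assumes asym: "asymmetric n (cap c)" and n: "n = 2 * m" and i1: "2 \<le> i1" "i1 \<le> m"
    and first: "first_robot n (case_prod (cap c)) (i1, 1)"
  shows "DA_above_others n (cap (move c (i1, 1) (alg2_target n (i1, 1))))"
proof -
  define F where "F = case_prod (cap c)"
  define q where "q = alg2_target n (i1, 1)"
  define F' where "F' = case_prod (cap (move c (i1, 1) q))"
  have q: "q = (i1 - 1, 1)" by (simp add: q_def alg2_target_def)
  have q_grid: "q \<in> grid n" and q_first: "prod.swap q < (1, i1)"
    using q n i1 by (auto simp: grid_def)
  have "(i1, 1) \<noteq> q" using q i1 by simp
  note move = cap_move[OF this F_def F'_def]
  have "F q = 0" using first q_grid q_first by (simp add: first_robot_def F_def)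
  then have raise: "F q < F' q" using move(3) by simp
  have lower: "\<forall>x\<in>grid n. x \<noteq> q \<longrightarrow> F' x \<le> F x" using move(1) by blast
  have keep: "\<forall>x\<in>grid n. prod.swap x < prod.swap q \<longrightarrow> F' x = F x"
  proof (intro ballI impI)
    fix x assume "x \<in> grid n" "prod.swap x < prod.swap q"
    moreover have "prod.swap q < prod.swap (i1, 1)" using q_first by simp
    ultimately have "x \<noteq> q" "x \<noteq> (i1, 1)" by (auto dest: less_trans)
    then show "F' x = F x" using move(2) by blast
  qed
  have moved: "below_DA n r F'" if "grid_bij n r \<kappa>" "below_DA n r F" "prod.swap q < \<kappa> q" for r \<kappa>
    using below_DA_after_move[OF that(1,2) q_grid lower keep raise] that(3) by blast
  have "prod.swap q < key_AD n q \<and> prod.swap q < read_AB n q \<and> prod.swap q < read_BA n q \<and>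
    prod.swap q < read_BC n q \<and> prod.swap q < key_CB n q \<and> prod.swap q < read_CD n q"
    using q n i1 by (simp add: key_AD_def read_AB_def read_BA_def read_BC_def key_CB_def read_CD_def; arith)
  then show ?thesis
    using asymmetric_below_DA(2)[OF asym] moved[OF grid_bij_AD] moved[OF grid_bij_AB] moved[OF grid_bij_BA]
      moved[OF grid_bij_BC] moved[OF grid_bij_CB] moved[OF grid_bij_CD]
    unfolding DA_above_others_iff F_def F'_def q_def by blast
qed

lemma move_second_robot:
  assumes valid: "valid_config n (cap c)" and asym: "asymmetric n (cap c)"
    and n: "n = 2 * m" and i1: "2 \<le> i1" "i1 \<le> m"
    and first: "first_robot n (case_prod (cap c)) (i1, 1)" "case_prod (cap c) (i1, 1) = 1"
    and second: "next_robot n (case_prod (cap c)) (i1, 1) p"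
  shows "DA_above_others n (cap (move c p (alg2_target n p)))"
proof -
  define F where "F = case_prod (cap c)"
  define q where "q = alg2_target n p"
  define F' where "F' = case_prod (cap (move c p q))"
  obtain i2 j2 where p: "p = (i2, j2)" by (cases p)
  interpret leading_pair n m i1 i2 j2
    using leading_pair_of_robots[OF valid asym n i1 first(1) second[unfolded p]] .
  have q_grid: "q \<in> grid n" and q_before: "prod.swap q < prod.swap p"
    using target_before_p2 by (simp_all add: q_def p)
  then have "p \<noteq> q" by auto
  note move = cap_move[OF this F_def F'_def]
  have "F q \<le> 1"
    using first next_robot_empty_before[OF first(1) second q_grid q_before]
    by (cases "q = (i1, 1)") (simp_all add: F_def)
  then have raise: "F q < F' q" by (rule move(3))
  have lower: "\<forall>x\<in>grid n. x \<noteq> q \<longrightarrow> F' x \<le> F x"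
    and other: "\<forall>x\<in>grid n. x \<noteq> p \<longrightarrow> x \<noteq> q \<longrightarrow> F' x = F x"
    using move(1,2) by blast+
  have below: "below_DA n (read_CD n) F" "below_DA n (read_AD n) F" "below_DA n (read_CB n) F"
    "below_DA n (read_AB n) F" "below_DA n (read_BA n) F" "below_DA n (read_BC n) F"
    using asymmetric_below_DA(2)[OF asym] by (simp_all add: DA_above_others_iff F_def)
  have harmless: "harmless_move (read_CD n) (read_CD n) (i1, 1) p q"
    "harmless_move (read_AD n) (key_AD n) (i1, 1) p q" "harmless_move (read_CB n) (key_CB n) (i1, 1) p q"
    "harmless_move (read_BA n) (read_BA n) (i1, 1) p q" "harmless_move (read_BC n) (read_BC n) (i1, 1) p q"
    using harmless_move_CD harmless_move_AD harmless_move_CB harmless_move_BA harmless_move_BC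
    by (simp_all add: q_def p)
  have moved: "below_DA n r F'"
    if "grid_bij n r \<kappa>" "below_DA n r F" "harmless_move r \<kappa> (i1, 1) p q" for r \<kappa>
    by (rule below_DA_after_second_move[OF that(1,2) q_grid lower other raise first[folded F_def]
        second[folded F_def] _ move(4) q_before that(3)]) (use \<open>p \<noteq> q\<close> in blast)
  have AB: "below_DA n (read_AB n) F'"
  proof (cases "harmless_move (read_AB n) (read_AB n) (i1, 1) p q")
    case True
    then show ?thesis using moved[OF grid_bij_AB below(4)] by blast
  next
    case False
    then have exceptional: "i2 = n" "j2 = m + 1" "i1 = m"
      using harmless_move_AB by (simp_all add: q_def p)
    then have q_eq: "q = (n, m)" using n bounds by (simp add: q_def p alg2_target_def)
    show ?thesis
      by (rule below_DA_AB_exceptional[OF n m_ge(1) below(5)])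
        (use first second lower other move(4,5) in \<open>simp_all add: q_eq p exceptional F_def\<close>)
  qed
  show ?thesis
    unfolding DA_above_others_iff q_def[symmetric] F'_def[symmetric]
    using moved[OF grid_bij_CD below(1) harmless(1)] moved[OF grid_bij_AD below(2) harmless(2)]
      moved[OF grid_bij_CB below(3) harmless(3)] AB moved[OF grid_bij_BA below(5) harmless(4)]
      moved[OF grid_bij_BC below(6) harmless(5)] by blast
qed

theorem lemma3:
  fixes n :: nat and c :: "nat \<Rightarrow> nat \<Rightarrow> nat" and p :: "nat \<times> nat"
  assumes "valid_config n (cap c)"
    and "purely_asymmetric n (cap c)"
    and "p \<in> leading_duo n (cap c)"
  shows "let f' = cap (move c p (alg2_target n p)) in
           lex_less (lam_CD n f') (lam_DA n f') \<and> lex_less (lam_AD n f') (lam_DA n f') \<and>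
           lex_less (lam_CB n f') (lam_DA n f') \<and> lex_less (lam_AB n f') (lam_DA n f') \<and>
           lex_less (lam_BA n f') (lam_DA n f') \<and> lex_less (lam_BC n f') (lam_DA n f')"
proof -
  have valid: "valid_config n (cap c)" and asym: "asymmetric n (cap c)"
    using assms(1,2) by (simp_all add: purely_asymmetric_def)
  obtain a b where "a \<in> {1..n}" "b \<in> {1..n}" "cap c a b \<noteq> 0"
    using valid unfolding valid_config_def by blast
  then have "(a, b) \<in> grid n" "case_prod (cap c) (a, b) \<noteq> 0" by (simp_all add: grid_def)
  from leading_duo_cases[OF assms(3) this]
  have "DA_above_others n (cap (move c p (alg2_target n p)))"
  proof (elim disjE exE conjE)
    assume first: "first_robot n (case_prod (cap c)) p"
    obtain m i1 where "n = 2 * m" "p = (i1, 1)" "2 \<le> i1" "i1 \<le> m"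
      using first_robot_on_side_DA[OF valid asym first] .
    then show ?thesis using move_first_robot[OF asym] first by blast
  next
    fix p1 assume first: "first_robot n (case_prod (cap c)) p1" "case_prod (cap c) p1 = 1"
      and second: "next_robot n (case_prod (cap c)) p1 p"
    obtain m i1 where "n = 2 * m" "p1 = (i1, 1)" "2 \<le> i1" "i1 \<le> m"
      using first_robot_on_side_DA[OF valid asym first(1)] .
    then show ?thesis using move_second_robot[OF valid asym] first second by auto
  qed
  then show ?thesis unfolding Let_def DA_above_others_def .
qed

end
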